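(* Let $\alpha>-1$. Then $\mathcal U_n^2(W_{\alpha,-1,-1})=y\,\mathcal U_{n-1}^2(W_{\alpha,1,-1})+(1-x-y)H_{n-1,2}(w_{1,\alpha})$ for $n\ge1$, and $\mathcal U_n^2(W_{-1,-1,-1})=x\,\mathcal U_{n-1}^2(W_{1,-1,-1})+y(1-x-y)H_{n-2,1}(w_{1,1})$ for $n\ge2$.
   Context: Polynomials are in $(x,y)$; $W_{a,b,c}(x,y)=x^ay^b(1-x-y)^c$ on $T^2=\{x,y\ge0,x+y\le1\}$; for $a,b,c>-1$, $\mathcal V_m^2(W_{a,b,c})$ is the space of polynomials of degree $m$ orthogonal in $L^2(W_{a,b,c},T^2)$ to all polynomials of degree $\le m-1$, and all spaces with negative index are $\{0\}$. For $a,b>-1$, $p_m^{(b,a)}(s,t)=t^{-b}(1-s-t)^{-a}\partial_t^m[t^{b+m}(1-s-t)^{a+m}]$, $H_{m,1}(w_{a,b})=\mathrm{span}\{p_m^{(b,a)}(x,y)\}$, $H_{m,2}(w_{a,b})=\mathrm{span}\{p_m^{(b,a)}(y,x)\}$, $H_{m,3}(w_{a,b})=\mathrm{span}\{p_m^{(b,a)}(1-x-y,y)\}$. For $a,b>-1$: $\mathcal U_m^2(W_{a,b,-1})=(1-x-y)\mathcal V_{m-1}^2(W_{a,b,1})+H_{m,3}(w_{a,b})$ ($m\ge0$); $\mathcal U_0^2(W_{a,-1,-1})=\mathrm{span}\{1\}$ and for $m\ge1$, $\mathcal U_m^2(W_{a,-1,-1})=y(1-x-y)\mathcal V_{m-2}^2(W_{a,1,1})+yH_{m-1,3}(w_{a,1})+(1-x-y)H_{m-1,2}(w_{1,a})$;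 for $m\ge2$, $\mathcal U_m^2(W_{-1,-1,-1})=xy(1-x-y)\mathcal V_{m-3}^2(W_{1,1,1})+xyH_{m-2,3}(w_{1,1})+x(1-x-y)H_{m-2,2}(w_{1,1})+y(1-x-y)H_{m-2,1}(w_{1,1})$. *)

theory Defs
  imports "HOL-Analysis.Analysis"
begin

definition poly2 :: "nat \<Rightarrow> (real \<Rightarrow> real \<Rightarrow> real) \<Rightarrow> bool" where
  "poly2 m f \<longleftrightarrow> (\<exists>c::nat \<Rightarrow> nat \<Rightarrow> real. \<forall>x y.
      f x y = (\<Sum>i\<le>m. \<Sum>j\<le>m - i. c i j * x ^ i * y ^ j))"

definition Wt :: "real \<Rightarrow> real \<Rightarrow> real \<Rightarrow> real \<Rightarrow> real \<Rightarrow> real" where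
  "Wt a b c x y = x powr a * y powr b * (1 - x - y) powr c"

definition T2 :: "(real \<times> real) set" where
  "T2 = {(x, y). 0 \<le> x \<and> 0 \<le> y \<and> x + y \<le> 1}"

definition ip :: "real \<Rightarrow> real \<Rightarrow> real \<Rightarrow> (real \<Rightarrow> real \<Rightarrow> real) \<Rightarrow> (real \<Rightarrow> real \<Rightarrow> real) \<Rightarrow> real" where
  "ip a b c f g = (LINT p:T2|lborel. f (fst p) (snd p) * g (fst p) (snd p) * Wt a b c (fst p) (snd p))"

text \<open>V_m^2(W_{a,b,c}); the index is an integer, negative index gives the zero space.\<close>
definition Vsp :: "int \<Rightarrow> real \<Rightarrow> real \<Rightarrow> real \<Rightarrow> (real \<Rightarrow> real \<Rightarrow> real) set" where
  "Vsp m a b c = (if m < 0 then {\<lambda>x y. 0}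
     else {f. poly2 (nat m) f \<and>
              (m \<ge> 1 \<longrightarrow> (\<forall>q. poly2 (nat (m - 1)) q \<longrightarrow> ip a b c f q = 0))})"

text \<open>p_m^{(b,a)}(s,t) = t^{-b}(1-s-t)^{-a} d^m/dt^m [t^{b+m}(1-s-t)^{a+m}]
  (valid where t > 0 and 1-s-t > 0).\<close>
definition pj :: "nat \<Rightarrow> real \<Rightarrow> real \<Rightarrow> real \<Rightarrow> real \<Rightarrow> real" where
  "pj m b a s t = t powr (-b) * (1 - s - t) powr (-a) *
     (deriv ^^ m) (\<lambda>\<tau>. \<tau> powr (b + real m) * (1 - s - \<tau>) powr (a + real m)) t"

definition spanT :: "nat \<Rightarrow> (real \<Rightarrow> real \<Rightarrow> real) \<Rightarrow> (real \<Rightarrow> real \<Rightarrow> real) set" where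
  "spanT m P = {f. poly2 m f \<and> (\<exists>c. \<forall>x y. 0 < x \<and> 0 < y \<and> x + y < 1 \<longrightarrow> f x y = c * P x y)}"

definition H1 :: "nat \<Rightarrow> real \<Rightarrow> real \<Rightarrow> (real \<Rightarrow> real \<Rightarrow> real) set" where
  "H1 m a b = spanT m (\<lambda>x y. pj m b a x y)"
definition H2 :: "nat \<Rightarrow> real \<Rightarrow> real \<Rightarrow> (real \<Rightarrow> real \<Rightarrow> real) set" where
  "H2 m a b = spanT m (\<lambda>x y. pj m b a y x)"
definition H3 :: "nat \<Rightarrow> real \<Rightarrow> real \<Rightarrow> (real \<Rightarrow> real \<Rightarrow> real) set" where
  "H3 m a b = spanT m (\<lambda>x y. pj m b a (1 - x - y) y)"

definition smul :: "(real \<Rightarrow> real \<Rightarrow> real) \<Rightarrow> (real \<Rightarrow> real \<Rightarrow> real) set \<Rightarrow> (real \<Rightarrow> real \<Rightarrow> real) set" where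
  "smul \<phi> A = (\<lambda>f x y. \<phi> x y * f x y) ` A"

definition splus :: "(real \<Rightarrow> real \<Rightarrow> real) set \<Rightarrow> (real \<Rightarrow> real \<Rightarrow> real) set \<Rightarrow> (real \<Rightarrow> real \<Rightarrow> real) set" where
  "splus A B = {(\<lambda>x y. f x y + g x y) | f g. f \<in> A \<and> g \<in> B}"

text \<open>U_m^2(W_{a,b,-1}).\<close>
definition U_ab :: "real \<Rightarrow> real \<Rightarrow> nat \<Rightarrow> (real \<Rightarrow> real \<Rightarrow> real) set" where
  "U_ab a b m = splus (smul (\<lambda>x y. 1 - x - y) (Vsp (int m - 1) a b 1)) (H3 m a b)"

text \<open>U_m^2(W_{a,-1,-1}).\<close>
definition U_a :: "real \<Rightarrow> nat \<Rightarrow> (real \<Rightarrow> real \<Rightarrow> real) set" where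
  "U_a a m = (if m = 0 then {(\<lambda>x y. c) | c. True}
     else splus (smul (\<lambda>x y. y * (1 - x - y)) (Vsp (int m - 2) a 1 1))
           (splus (smul (\<lambda>x y. y) (H3 (m - 1) a 1))
                  (smul (\<lambda>x y. 1 - x - y) (H2 (m - 1) 1 a))))"

text \<open>U_m^2(W_{-1,-1,-1}), meaningful for m \<ge> 2 only.\<close>
definition U_0 :: "nat \<Rightarrow> (real \<Rightarrow> real \<Rightarrow> real) set" where
  "U_0 m =
     splus (smul (\<lambda>x y. x * y * (1 - x - y)) (Vsp (int m - 3) 1 1 1))
      (splus (smul (\<lambda>x y. x * y) (H3 (m - 2) 1 1))
       (splus (smul (\<lambda>x y. x * (1 - x - y)) (H2 (m - 2) 1 1))
              (smul (\<lambda>x y. y * (1 - x - y)) (H1 (m - 2) 1 1))))"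

end

theory Submission
  imports Defs
begin

text \<open>Both identities are regroupings of the defining decompositions: multiplication by a
  fixed function distributes over the sum of function spaces and composes with itself, and the
  sum of spaces is associative.\<close>

lemma smul_splus: "smul p (splus A B) = splus (smul p A) (smul p B)"
proof (rule set_eqI, rule iffI)
  fix h assume "h \<in> smul p (splus A B)"
  then obtain f g where fg: "f \<in> A" "g \<in> B" and h: "h = (\<lambda>x y. p x y * (f x y + g x y))"
    unfolding smul_def splus_def by blast
  have "h = (\<lambda>x y. (\<lambda>x y. p x y * f x y) x y + (\<lambda>x y. p x y * g x y) x y)"
    unfolding h by (simp add: distrib_left)
  moreover have "(\<lambda>x y. p x y * f x y) \<in> smul p A" "(\<lambda>x y. p x y * g x y) \<in> smul p B"
    using fg unfolding smul_def by auto
  ultimately show "h \<in> splus (smul p A) (smul p B)"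
    unfolding splus_def
    by (intro CollectI exI[of _ "\<lambda>x y. p x y * f x y"] exI[of _ "\<lambda>x y. p x y * g x y"]) simp
next
  fix h assume "h \<in> splus (smul p A) (smul p B)"
  then obtain f g where fg: "f \<in> A" "g \<in> B" and h: "h = (\<lambda>x y. p x y * f x y + p x y * g x y)"
    unfolding smul_def splus_def by blast
  have "h = (\<lambda>x y. p x y * (\<lambda>x y. f x y + g x y) x y)"
    unfolding h by (simp add: distrib_left)
  moreover have "(\<lambda>x y. f x y + g x y) \<in> splus A B"
    using fg unfolding splus_def by blast
  ultimately show "h \<in> smul p (splus A B)"
    unfolding smul_def by (rule image_eqI)
qed

lemma smul_smul: "smul p (smul q A) = smul (\<lambda>x y. p x y * q x y) A"
  unfolding smul_def image_image by (simp add: mult.assoc)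

lemma splus_assoc: "splus (splus A B) C = splus A (splus B C)"
proof (rule set_eqI, rule iffI)
  fix h assume "h \<in> splus (splus A B) C"
  then obtain f g k where "f \<in> A" "g \<in> B" "k \<in> C" and h: "h = (\<lambda>x y. (f x y + g x y) + k x y)"
    unfolding splus_def by blast
  moreover have "h = (\<lambda>x y. f x y + (\<lambda>x y. g x y + k x y) x y)"
    unfolding h by (simp add: add.assoc)
  ultimately show "h \<in> splus A (splus B C)"
    unfolding splus_def by (intro CollectI exI[of _ f] exI[of _ "\<lambda>x y. g x y + k x y"]) auto
next
  fix h assume "h \<in> splus A (splus B C)"
  then obtain f g k where "f \<in> A" "g \<in> B" "k \<in> C" and h: "h = (\<lambda>x y. f x y + (g x y + k x y))"
    unfolding splus_def by blast
  moreover have "h = (\<lambda>x y. (\<lambda>x y. f x y + g x y) x y + k x y)"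
    unfolding h by (simp add: add.assoc)
  ultimately show "h \<in> splus (splus A B) C"
    unfolding splus_def by (intro CollectI exI[of _ "\<lambda>x y. f x y + g x y"] exI[of _ k]) auto
qed

lemma U_a_eq_splus_U_ab:
  assumes "n \<ge> 1"
  shows "U_a a n = splus (smul (\<lambda>x y. y) (U_ab a 1 (n - 1))) (smul (\<lambda>x y. 1 - x - y) (H2 (n - 1) 1 a))"
proof -
  have shift: "int (n - 1) - 1 = int n - 2" and "n \<noteq> 0"
    using assms by auto
  show ?thesis
    unfolding U_a_def U_ab_def shift if_not_P[OF \<open>n \<noteq> 0\<close>] smul_splus smul_smul splus_assoc ..
qed

lemma U_0_eq_splus_U_a:
  assumes "n \<ge> 2"
  shows "U_0 n = splus (smul (\<lambda>x y. x) (U_a 1 (n - 1))) (smul (\<lambda>x y. y * (1 - x - y)) (H1 (n - 2) 1 1))"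
proof -
  have shift: "int (n - 1) - 2 = int n - 3" "n - 1 - 1 = n - 2" and "n - 1 \<noteq> 0"
    using assms by auto
  have assoc: "(\<lambda>x y. x * (y * (1 - x - y))) = (\<lambda>x y::real. x * y * (1 - x - y))"
    by (simp add: fun_eq_iff mult.assoc)
  show ?thesis
    unfolding U_0_def U_a_def shift if_not_P[OF \<open>n - 1 \<noteq> 0\<close>] smul_splus smul_smul splus_assoc assoc ..
qed

theorem corollary3p2:
  fixes \<alpha> :: real
  assumes "\<alpha> > -1"
  shows "(\<forall>n\<ge>1. U_a \<alpha> n =
            splus (smul (\<lambda>x y. y) (U_ab \<alpha> 1 (n - 1)))
                  (smul (\<lambda>x y. 1 - x - y) (H2 (n - 1) 1 \<alpha>)))
       \<and> (\<forall>n\<ge>2. U_0 n =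
            splus (smul (\<lambda>x y. x) (U_a 1 (n - 1)))
                  (smul (\<lambda>x y. y * (1 - x - y)) (H1 (n - 2) 1 1)))"
  using U_a_eq_splus_U_ab U_0_eq_splus_U_a by blast

end
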